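(* Let $\mathcal{A}$ be an integral domain with field of fractions $\mathcal{F}$, let $\mathcal{Z}\subsetneq\mathcal{A}$ be a prime ideal, and let $\mathcal{P}=\{n/d\mid n\in\mathcal{A},\ d\in\mathcal{A}\setminus\mathcal{Z}\}$ be the set of causal transfer functions. Suppose there exist $a,b,a',b'\in\mathcal{A}$ with $a'\neq 0$ such that: (i) $ab=a'b'$; (ii) the ratio $a/a'$ belongs to $\mathcal{P}$ (i.e. is a causal transfer function) and does not have a coprime factorization over $\mathcal{A}$; (iii) the pair $(a,b)$ is coprime over $\mathcal{A}$, i.e. there exist $x,y\in\mathcal{A}$ with $xa+yb=1$. Then there exists a causal stabilizable plant $P$ which has neither a right-coprime factorization nor a left-coprime factorization over $\mathcal{A}$.
   Context: Setting: $\mathcal{A}$ is the ring of stable causal transfer functions, $\mathcal{F}$ its field of fractions (all possible transfer functions), and causality is defined via the prime ideal $\mathcal{Z}$: a plant (a matrix) is causal if all its entries lie in $\mathcal{P}$. For a plant $P$ (an $n\times m$ matrix over $\mathcal{F}$) and a controller $C$ (an $m\times n$ matrix over $\mathcal{F}$) with $\det(I_n+PC)\neq0$, the closed-loop matrix is $H(P,C)=\begin{pmatrix}(I_n+PC)^{-1} & -P(I_m+CP)^{-1}\\ C(I_n+PC)^{-1} & (I_m+CP)^{-1}\end{pmatrix}$; the closed loop is stable if $H(P,C)$ has all entries in $\mathcal{A}$, and $P$ is stabilizable if some such $C$ exists. A right-coprime factorization of $P$ over $\mathcal{A}$ is $P=ND^{-1}$ with $N,D$ matrices over $\mathcal{A}$,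 $\det D\neq0$, such that $YN+XD=I$ for some matrices $X,Y$ over $\mathcal{A}$; a left-coprime factorization is $P=\tilde D^{-1}\tilde N$ with $\tilde N,\tilde D$ over $\mathcal{A}$, $\det\tilde D\neq0$, and $\tilde N\tilde Y+\tilde D\tilde X=I$ for some $\tilde X,\tilde Y$ over $\mathcal{A}$. For a scalar $p\in\mathcal{F}$ a coprime factorization is $p=n/d$ with $n,d\in\mathcal{A}$, $d\neq0$, and $xn+yd=1$ for some $x,y\in\mathcal{A}$. *)

theory Defs
  imports "HOL-Computational_Algebra.Fraction_Field" "Jordan_Normal_Form.Gauss_Jordan_Elimination"
    "Jordan_Normal_Form.Determinant"
begin

text \<open>The ring A is an abstract integral domain (type class idom); its field of
fractions F is the type 'a fract.  Elements of A are embedded into F as Fract a 1.\<close>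

definition in_A :: "'a::idom fract \<Rightarrow> bool" where
  "in_A f \<longleftrightarrow> (\<exists>a. f = Fract a 1)"

definition proper_prime_ideal :: "'a::idom set \<Rightarrow> bool" where
  "proper_prime_ideal Z \<longleftrightarrow>
     0 \<in> Z \<and> (\<forall>x\<in>Z. \<forall>y\<in>Z. x + y \<in> Z) \<and> (\<forall>r. \<forall>x\<in>Z. r * x \<in> Z) \<and>
     Z \<noteq> UNIV \<and> (\<forall>x y. x * y \<in> Z \<longrightarrow> x \<in> Z \<or> y \<in> Z)"

definition causal_tf :: "'a::idom set \<Rightarrow> 'a fract set" where
  "causal_tf Z = {Fract n d | n d. d \<notin> Z}"

definition mat_over_A :: "'a::idom fract mat \<Rightarrow> bool" where
  "mat_over_A M \<longleftrightarrow> (\<forall>i < dim_row M. \<forall>j < dim_col M. in_A (M $$ (i, j)))"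

definition causal_mat :: "'a::idom set \<Rightarrow> 'a fract mat \<Rightarrow> bool" where
  "causal_mat Z M \<longleftrightarrow> (\<forall>i < dim_row M. \<forall>j < dim_col M. M $$ (i, j) \<in> causal_tf Z)"

definition minv :: "'a::field mat \<Rightarrow> 'a mat" where
  "minv M = the (mat_inverse M)"

definition closed_loop :: "'a::field mat \<Rightarrow> 'a mat \<Rightarrow> 'a mat" where
  "closed_loop P C =
     (let n = dim_row P; m = dim_col P in
      four_block_mat (minv (1\<^sub>m n + P * C)) (- (P * minv (1\<^sub>m m + C * P)))
                     (C * minv (1\<^sub>m n + P * C)) (minv (1\<^sub>m m + C * P)))"

definition stabilizes :: "'a::idom fract mat \<Rightarrow> 'a fract mat \<Rightarrow> bool" where
  "stabilizes P C \<longleftrightarrow> C \<in> carrier_mat (dim_col P) (dim_row P) \<and>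
     det (1\<^sub>m (dim_row P) + P * C) \<noteq> 0 \<and> mat_over_A (closed_loop P C)"

definition stabilizable :: "'a::idom fract mat \<Rightarrow> bool" where
  "stabilizable P \<longleftrightarrow> (\<exists>C. stabilizes P C)"

definition has_right_coprime_fact :: "'a::idom fract mat \<Rightarrow> bool" where
  "has_right_coprime_fact P \<longleftrightarrow>
     (let n = dim_row P; m = dim_col P in
      \<exists>N D X Y. N \<in> carrier_mat n m \<and> D \<in> carrier_mat m m \<and>
        X \<in> carrier_mat m m \<and> Y \<in> carrier_mat m n \<and>
        mat_over_A N \<and> mat_over_A D \<and> mat_over_A X \<and> mat_over_A Y \<and>
        det D \<noteq> 0 \<and> P = N * minv D \<and> Y * N + X * D = 1\<^sub>m m)"

definition has_left_coprime_fact :: "'a::idom fract mat \<Rightarrow> bool" where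
  "has_left_coprime_fact P \<longleftrightarrow>
     (let n = dim_row P; m = dim_col P in
      \<exists>Nt Dt Xt Yt. Nt \<in> carrier_mat n m \<and> Dt \<in> carrier_mat n n \<and>
        Xt \<in> carrier_mat n n \<and> Yt \<in> carrier_mat m n \<and>
        mat_over_A Nt \<and> mat_over_A Dt \<and> mat_over_A Xt \<and> mat_over_A Yt \<and>
        det Dt \<noteq> 0 \<and> P = minv Dt * Nt \<and> Nt * Yt + Dt * Xt = 1\<^sub>m n)"

definition has_coprime_fact :: "'a::idom fract \<Rightarrow> bool" where
  "has_coprime_fact p \<longleftrightarrow>
     (\<exists>n d x y. d \<noteq> 0 \<and> p = Fract n d \<and> x * n + y * d = 1)"

end

theory Submission
  imports Defs
begin

text \<open>The scalar plant p = a/a', viewed as a 1 x 1 matrix, already works.  With the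
controller c = x a'/(y b) one gets 1 + p c = 1/(y b), so the closed-loop entries
1/(1 + p c) = y b, p/(1 + p c) = y b' and c/(1 + p c) = x a' all lie in A.  Here y b is
nonzero, since otherwise x a = 1 and a/a' = 1/(x a') would be a coprime factorization.
A right or left coprime factorization of a 1 x 1 matrix is just a scalar one, which a/a'
does not have.\<close>

abbreviation mat1x1 :: "'b \<Rightarrow> 'b mat" where
  "mat1x1 u \<equiv> mat 1 1 (\<lambda>_. u)"

lemma mat1x1_eq: "M \<in> carrier_mat 1 1 \<Longrightarrow> M = mat1x1 (M $$ (0, 0))"
  by (rule eq_matI) auto

lemma mat1x1_inject: "mat1x1 u = mat1x1 v \<Longrightarrow> u = v"
  by (drule arg_cong[where f = "\<lambda>M. M $$ (0, 0)"]) simp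

lemma times_mat1x1: "mat1x1 (u :: 'b::semiring_1) * mat1x1 v = mat1x1 (u * v)"
  by (rule eq_matI) (auto simp: scalar_prod_def)

lemma plus_mat1x1: "mat1x1 (u :: 'b::semiring_1) + mat1x1 v = mat1x1 (u + v)"
  by (rule eq_matI) auto

lemma one_mat1x1: "(1\<^sub>m 1 :: 'b::semiring_1 mat) = mat1x1 1"
  by (rule eq_matI) auto

lemma uminus_mat1x1: "- mat1x1 (u :: 'b::ring_1) = mat1x1 (- u)"
  by (rule eq_matI) auto

lemma det_mat1x1: "det (mat1x1 (u :: 'b::comm_ring_1)) = u"
  by (subst det_single) auto

lemma minv_mat1x1:
  fixes u :: "'b::field"
  assumes "u \<noteq> 0"
  shows "minv (mat1x1 u) = mat1x1 (inverse u)"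
proof -
  let ?M = "mat1x1 u" and ?N = "mat1x1 (inverse u)"
  have MN: "?M * ?N = 1\<^sub>m 1" and NM: "?N * ?M = 1\<^sub>m 1"
    unfolding times_mat1x1 one_mat1x1 using assms by simp_all
  have "?M \<in> Units (ring_mat TYPE('b) 1 undefined)"
    unfolding Units_def ring_mat_simps using MN NM by auto
  then obtain B where B: "mat_inverse ?M = Some B"
    using mat_inverse(1)[of ?M 1 undefined] by fastforce
  from mat_inverse(2)[OF _ B, of 1] have MB: "?M * B = 1\<^sub>m 1" and B_carrier: "B \<in> carrier_mat 1 1"
    by auto
  have "B = (?N * ?M) * B" using NM B_carrier by simp
  also have "\<dots> = ?N * (?M * B)"
    by (rule assoc_mult_mat[of _ 1 1 _ 1 _ 1]) (use B_carrier in auto)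
  also have "\<dots> = ?N" using MB by simp
  finally show ?thesis unfolding minv_def B by simp
qed

lemma in_A_uminus: "in_A (f :: 'a::idom fract) \<Longrightarrow> in_A (- f)"
  unfolding in_A_def by auto

lemma mat_over_A_mat1x1_iff: "mat_over_A (mat1x1 f) \<longleftrightarrow> in_A f"
  unfolding mat_over_A_def by auto

lemma mat_over_A_four_block_mat1x1:
  assumes "in_A f" "in_A g" "in_A h" "in_A k"
  shows "mat_over_A (four_block_mat (mat1x1 f) (mat1x1 g) (mat1x1 h) (mat1x1 k))"
  using assms unfolding mat_over_A_def by (auto simp: less_Suc_eq)

lemma causal_mat_mat1x1: "p \<in> causal_tf Z \<Longrightarrow> causal_mat Z (mat1x1 p)"
  unfolding causal_mat_def by auto

lemma closed_loop_mat1x1: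
  fixes p c :: "'b::field"
  assumes "1 + p * c \<noteq> 0"
  defines "s \<equiv> inverse (1 + p * c)"
  shows "closed_loop (mat1x1 p) (mat1x1 c) =
    four_block_mat (mat1x1 s) (mat1x1 (- (p * s))) (mat1x1 (c * s)) (mat1x1 s)"
proof -
  have PC: "1\<^sub>m 1 + mat1x1 p * mat1x1 c = mat1x1 (1 + p * c)"
    and CP: "1\<^sub>m 1 + mat1x1 c * mat1x1 p = mat1x1 (1 + p * c)"
    unfolding times_mat1x1 one_mat1x1 plus_mat1x1 by (simp_all add: mult.commute)
  show ?thesis
    unfolding closed_loop_def Let_def dim_row_mat dim_col_mat PC CP
    unfolding minv_mat1x1[OF assms(1)] times_mat1x1 uminus_mat1x1 s_def ..
qed

lemma stabilizes_mat1x1I: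
  fixes p c :: "'a::idom fract"
  assumes "1 + p * c \<noteq> 0"
    and "in_A (inverse (1 + p * c))" "in_A (p * inverse (1 + p * c))"
    "in_A (c * inverse (1 + p * c))"
  shows "stabilizes (mat1x1 p) (mat1x1 c)"
  unfolding stabilizes_def dim_row_mat dim_col_mat closed_loop_mat1x1[OF assms(1)]
    times_mat1x1 one_mat1x1 plus_mat1x1 det_mat1x1
  by (intro conjI mat_over_A_four_block_mat1x1 in_A_uminus) (use assms in auto)

lemma has_coprime_fact_if_over_A:
  fixes p n d u v :: "'a::idom fract"
  assumes "in_A n" "in_A d" "in_A u" "in_A v"
    and "d \<noteq> 0" "p = n / d" "v * n + u * d = 1"
  shows "has_coprime_fact p"
proof -
  obtain n' d' u' v' where entries:
      "n = Fract n' 1" "d = Fract d' 1" "u = Fract u' 1" "v = Fract v' 1"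
    using assms(1-4) unfolding in_A_def by blast
  have "d' \<noteq> 0"
    using assms(5) entries(2) fract_collapse(1) by blast
  moreover have "p = Fract n' d'"
    using assms(6) unfolding entries by simp
  moreover have "Fract (v' * n' + u' * d') 1 = Fract 1 1"
    using assms(7) unfolding entries by (simp add: One_fract_def)
  then have "v' * n' + u' * d' = 1"
    by (simp add: eq_fract)
  ultimately show ?thesis
    unfolding has_coprime_fact_def by blast
qed

lemma entries_over_A_mat1x1:
  assumes "M \<in> carrier_mat 1 1" "mat_over_A M"
  obtains f where "M = mat1x1 f" "in_A f"
  using assms mat1x1_eq mat_over_A_mat1x1_iff by metis

lemma has_coprime_fact_if_right_coprime_fact_mat1x1:
  assumes "has_right_coprime_fact (mat1x1 (p :: 'a::idom fract))"
  shows "has_coprime_fact p"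
proof -
  obtain N D X Y where carrier: "N \<in> carrier_mat 1 1" "D \<in> carrier_mat 1 1"
      "X \<in> carrier_mat 1 1" "Y \<in> carrier_mat 1 1"
    and over_A: "mat_over_A N" "mat_over_A D" "mat_over_A X" "mat_over_A Y"
    and det: "det D \<noteq> 0" and fact: "mat1x1 p = N * minv D" and bezout: "Y * N + X * D = 1\<^sub>m 1"
    using assms unfolding has_right_coprime_fact_def Let_def by auto
  obtain n d u v where entries: "N = mat1x1 n" "D = mat1x1 d" "X = mat1x1 u" "Y = mat1x1 v"
    and "in_A n" "in_A d" "in_A u" "in_A v"
    using carrier over_A entries_over_A_mat1x1 by metis
  moreover have "d \<noteq> 0"
    using det unfolding entries det_mat1x1 .
  moreover have "mat1x1 p = mat1x1 (n / d)"
    using fact unfolding entries minv_mat1x1[OF \<open>d \<noteq> 0\<close>] times_mat1x1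
    by (simp add: divide_inverse)
  moreover have "mat1x1 (v * n + u * d) = mat1x1 1"
    using bezout unfolding entries times_mat1x1 plus_mat1x1 one_mat1x1
    by (simp add: mult.commute)
  ultimately show ?thesis
    using has_coprime_fact_if_over_A mat1x1_inject by metis
qed

lemma has_coprime_fact_if_left_coprime_fact_mat1x1:
  assumes "has_left_coprime_fact (mat1x1 (p :: 'a::idom fract))"
  shows "has_coprime_fact p"
proof -
  obtain N D X Y where carrier: "N \<in> carrier_mat 1 1" "D \<in> carrier_mat 1 1"
      "X \<in> carrier_mat 1 1" "Y \<in> carrier_mat 1 1"
    and over_A: "mat_over_A N" "mat_over_A D" "mat_over_A X" "mat_over_A Y"
    and det: "det D \<noteq> 0" and fact: "mat1x1 p = minv D * N" and bezout: "N * Y + D * X = 1\<^sub>m 1"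
    using assms unfolding has_left_coprime_fact_def Let_def by auto
  obtain n d u v where entries: "N = mat1x1 n" "D = mat1x1 d" "X = mat1x1 u" "Y = mat1x1 v"
    and "in_A n" "in_A d" "in_A u" "in_A v"
    using carrier over_A entries_over_A_mat1x1 by metis
  moreover have "d \<noteq> 0"
    using det unfolding entries det_mat1x1 .
  moreover have "mat1x1 p = mat1x1 (n / d)"
    using fact unfolding entries minv_mat1x1[OF \<open>d \<noteq> 0\<close>] times_mat1x1
    by (simp add: divide_inverse mult.commute)
  moreover have "mat1x1 (v * n + u * d) = mat1x1 1"
    using bezout unfolding entries times_mat1x1 plus_mat1x1 one_mat1x1
    by (simp add: mult.commute)
  ultimately show ?thesis
    using has_coprime_fact_if_over_A mat1x1_inject by metis
qed

lemma has_coprime_fact_Fract_if_left_inverse: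
  assumes "x * a = 1" "a' \<noteq> 0"
  shows "has_coprime_fact (Fract a a')"
proof -
  have "x * a' \<noteq> 0"
    using assms by auto
  moreover have "a * (x * a') = 1 * a'"
    using assms(1) by (simp add: mult.left_commute mult.commute)
  then have "Fract a a' = Fract 1 (x * a')"
    using eq_fract(1) assms(2) \<open>x * a' \<noteq> 0\<close> by blast
  ultimately show ?thesis
    unfolding has_coprime_fact_def by (intro exI[of _ 1] exI[of _ "x * a'"] exI[of _ 1] exI[of _ 0]) auto
qed

lemma stabilizes_Fract_mat1x1:
  fixes a b a' b' x y :: "'a::idom"
  assumes "a' \<noteq> 0" "a * b = a' * b'" "x * a + y * b = 1" "y * b \<noteq> 0"
  shows "stabilizes (mat1x1 (Fract a a')) (mat1x1 (Fract (x * a') (y * b)))"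
proof -
  let ?p = "Fract a a'" and ?c = "Fract (x * a') (y * b)"
  have "?p * ?c = Fract (x * a) (y * b)"
    using assms(1) mult_fract_cancel[of a' "x * a" "y * b"] by (simp add: ac_simps)
  then have sum: "1 + ?p * ?c = Fract 1 (y * b)"
    using assms(3,4) by (simp add: One_fract_def algebra_simps)
  then have inverse: "inverse (1 + ?p * ?c) = Fract (y * b) 1"
    by simp
  show ?thesis
  proof (rule stabilizes_mat1x1I)
    show "1 + ?p * ?c \<noteq> 0"
      unfolding sum using assms(4) by (simp add: eq_fract Zero_fract_def)
    show "in_A (inverse (1 + ?p * ?c))"
      unfolding inverse in_A_def by blast
    have "?p * inverse (1 + ?p * ?c) = Fract (y * b') 1"
      unfolding inverse using assms(1,2) by (simp add: eq_fract algebra_simps)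
    then show "in_A (?p * inverse (1 + ?p * ?c))"
      unfolding in_A_def by blast
    have "?c * inverse (1 + ?p * ?c) = Fract (x * a') 1"
      unfolding inverse using assms(4) by (simp add: eq_fract algebra_simps)
    then show "in_A (?c * inverse (1 + ?p * ?c))"
      unfolding in_A_def by blast
  qed
qed

theorem proposition1:
  fixes Z :: "'a::idom set" and a b a' b' :: 'a
  assumes "proper_prime_ideal Z"
    and "a' \<noteq> 0"
    and "a * b = a' * b'"
    and "Fract a a' \<in> causal_tf Z"
    and "\<not> has_coprime_fact (Fract a a')"
    and "\<exists>x y. x * a + y * b = 1"
  shows "\<exists>P :: 'a fract mat. causal_mat Z P \<and> stabilizable P \<and>
           \<not> has_right_coprime_fact P \<and> \<not> has_left_coprime_fact P"
proof -
  obtain x y where xy: "x * a + y * b = 1"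
    using assms(6) by auto
  have "y * b \<noteq> 0"
    using has_coprime_fact_Fract_if_left_inverse[of x a a'] xy assms(2,5) by auto
  then have "stabilizable (mat1x1 (Fract a a'))"
    unfolding stabilizable_def using stabilizes_Fract_mat1x1 assms(2,3) xy by blast
  moreover have "causal_mat Z (mat1x1 (Fract a a'))"
    using assms(4) by (rule causal_mat_mat1x1)
  moreover have "\<not> has_right_coprime_fact (mat1x1 (Fract a a'))"
    and "\<not> has_left_coprime_fact (mat1x1 (Fract a a'))"
    using assms(5) has_coprime_fact_if_right_coprime_fact_mat1x1
      has_coprime_fact_if_left_coprime_fact_mat1x1 by blast+
  ultimately show ?thesis
    by blast
qed

end
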